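(* Consider Model 2 (the risk-neutral insider model) with $N\ge1$ trading periods, as described in the context. A subgame perfect equilibrium exists. In this equilibrium there are real numbers $\beta_n,\lambda_n,\alpha_n,\delta_n,\Sigma_n$ such that for $n=1,\dots,N$: $x_n=\beta_n(v-p_{n-1})$, $p_n-p_{n-1}=\lambda_n y_n$, $\Sigma_n=\operatorname{Var}(v\mid y_1,\dots,y_n)$, and $$E\Big(\sum_{k=n}^N\pi_k\,\Big|\,p_1,\dots,p_{n-1},v\Big)=\alpha_{n-1}(v-p_{n-1})^2+\delta_{n-1},$$ where $$\delta_n=a_n\sigma_u\Delta t_N^{1/2}\Sigma_n^{1/2},\quad \alpha_n=b_n\sigma_u\Delta t_N^{1/2}\Sigma_n^{-1/2}\quad(n=0,\dots,N-1),\qquad \beta_n=c_n\sigma_u\Delta t_N^{1/2}\Sigma_{n-1}^{-1/2}\quad(n=1,\dots,N),$$ and the sequences $\{a_n\},\{b_n\},\{c_n\}$, with terminal values $a_{N-1}=0$, $b_{N-1}=\tfrac12$, $c_N=1$, satisfy for $n=1,\dots,N-1$ $$a_{n-1}=a_n\Big(\frac{1}{c_n^2+1}\Big)^{1/2}+b_n\Big(\frac{1}{c_n^2+1}\Big)^{3/2}c_n^2,\qquad b_{n-1}=b_n\Big(\frac{1}{c_n^2+1}\Big)^{3/2}+\frac{c_n}{c_n^2+1},\qquad a_n+b_n=\frac{1-c_n^2}{c_n(1+c_n^2)^{1/2}},$$ with $c_n>0$ for $n=1,\dots,N$.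
   Context: Model. Fix an integer $N\ge1$ and put $\Delta t_N=1/N$. A risky asset has liquidation value $v\sim N(p_0,\Sigma_0)$ with $\Sigma_0>0$. In each period $n=1,\dots,N$ noise traders submit $u_n\sim N(0,\sigma_u^2\Delta t_N)$ ($\sigma_u>0$), i.i.d. and independent of $v$. The insider knows $v$ and submits $x_n=\beta_n(v-p_{n-1})$ with $\beta_n\in\mathbb R$. The market maker observes $y_n=x_n+u_n$ and sets $p_n=E[v\mid y_1,\dots,y_n]$. The insider's profit in period $n$ is $\pi_n=x_n(v-p_n)$ and $\Sigma_n=\operatorname{Var}(v\mid y_1,\dots,y_n)$. For such strategies, with $\lambda_n=\beta_n\Sigma_{n-1}/(\beta_n^2\Sigma_{n-1}+\sigma_u^2\Delta t_N)$ one has $p_n-p_{n-1}=\lambda_ny_n$, $\Sigma_n=\Sigma_{n-1}\sigma_u^2\Delta t_N/(\beta_n^2\Sigma_{n-1}+\sigma_u^2\Delta t_N)$, and $E(\sum_{k=n}^N\pi_k\mid p_1,\dots,p_{n-1},v)=\alpha_{n-1}(v-p_{n-1})^2+\delta_{n-1}$ with $\alpha_N=\delta_N=0$, $\alpha_{n-1}=\alpha_n(1-\lambda_n\beta_n)^2+\beta_n(1-\lambda_n\beta_n)$, $\delta_{n-1}=\delta_n+\alpha_n\lambda_n^2\sigma_u^2\Delta t_N$. Equilibrium. An insider strategy specifies, for each period $n$ and each value $\Sigma_{n-1}>0$ of the current conditional variance, an intensity $\beta_n$. Given the strategy for periods $n+1,\dots,N$, each choice of $\beta_n$ determines (with later intensities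 given by the strategy applied to the resulting variances) $\alpha_{n-1},\delta_{n-1}$ as functions of $\beta_n$ and $\Sigma_{n-1}$. A subgame perfect equilibrium of Model 2 is a strategy such that for every $n$ and every $\Sigma_{n-1}>0$ the prescribed $\beta_n$ maximizes over $\beta_n\in\mathbb R$ the ex ante expected profit $E(\sum_{k=n}^N\pi_k)=\alpha_{n-1}\Sigma_{n-1}+\delta_{n-1}$, with the market maker pricing efficiently given this strategy. *)

theory Defs
  imports Complex_Main
begin

text \<open>Model 2 (risk-neutral insider), N periods, Delta t = 1 / N.
  All quantities are deterministic functions of the conditional variance.\<close>

definition dt :: "nat \<Rightarrow> real" where
  "dt N = 1 / real N"

text \<open>Market maker's efficient pricing coefficient lambda_n, given Sigma_{n-1} = S and beta_n = b.\<close>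
definition lamf :: "real \<Rightarrow> nat \<Rightarrow> real \<Rightarrow> real \<Rightarrow> real" where
  "lamf su N S b = b * S / (b\<^sup>2 * S + su\<^sup>2 * dt N)"

text \<open>Updated conditional variance Sigma_n, given Sigma_{n-1} = S and beta_n = b.\<close>
definition sigf :: "real \<Rightarrow> nat \<Rightarrow> real \<Rightarrow> real \<Rightarrow> real" where
  "sigf su N S b = S * su\<^sup>2 * dt N / (b\<^sup>2 * S + su\<^sup>2 * dt N)"

text \<open>One backward step: given Sigma_{n-1} = S, beta_n = b, and the continuation
  map Sigma_n \<mapsto> (alpha_n, delta_n), return (alpha_{n-1}, delta_{n-1}).\<close>
definition stepv :: "real \<Rightarrow> nat \<Rightarrow> (real \<Rightarrow> real \<times> real) \<Rightarrow> real \<Rightarrow> real \<Rightarrow> real \<times> real" where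
  "stepv su N cont S b =
     (let l = lamf su N S b; S' = sigf su N S b; ad = cont S'
      in (fst ad * (1 - l * b)\<^sup>2 + b * (1 - l * b), snd ad + fst ad * l\<^sup>2 * su\<^sup>2 * dt N))"

text \<open>Given an insider strategy st (st n S = beta_n when Sigma_{n-1} = S),
  AD st su N m S = (alpha_{N-m}, delta_{N-m}) as functions of Sigma_{N-m} = S.\<close>
fun AD :: "(nat \<Rightarrow> real \<Rightarrow> real) \<Rightarrow> real \<Rightarrow> nat \<Rightarrow> nat \<Rightarrow> real \<Rightarrow> real \<times> real" where
  "AD st su N 0 S = (0, 0)"
| "AD st su N (Suc m) S = stepv su N (AD st su N m) S (st (N - m) S)"

text \<open>Ex ante expected profit from period n on, E(sum_{k=n}^N pi_k) = alpha_{n-1} Sigma_{n-1} + delta_{n-1},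
  when Sigma_{n-1} = S, beta_n = b and later periods follow st.\<close>
definition exprofit :: "(nat \<Rightarrow> real \<Rightarrow> real) \<Rightarrow> real \<Rightarrow> nat \<Rightarrow> nat \<Rightarrow> real \<Rightarrow> real \<Rightarrow> real" where
  "exprofit st su N n S b = (let ad = stepv su N (AD st su N (N - n)) S b in fst ad * S + snd ad)"

definition is_SPE :: "(nat \<Rightarrow> real \<Rightarrow> real) \<Rightarrow> real \<Rightarrow> nat \<Rightarrow> bool" where
  "is_SPE st su N \<longleftrightarrow>
     (\<forall>n\<in>{1..N}. \<forall>S>0. \<forall>b::real. exprofit st su N n S b \<le> exprofit st su N n S (st n S))"

end

theory Submission
  imports Defs
begin

text \<open>Write \<open>s = \<sigma>\<^sub>u sqrt \<Delta>t\<close>. If the continuation value has the form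
  \<open>\<alpha> = B s / sqrt \<Sigma>\<close>, \<open>\<delta> = A s sqrt \<Sigma>\<close> and the insider trades with intensity
  \<open>\<beta> = x s / sqrt \<Sigma>\<close>, then one backward step reproduces this form, and the ex ante
  profit is \<open>s sqrt \<Sigma> ((A + B) / sqrt (1 + x\<^sup>2) + x / (1 + x\<^sup>2))\<close>. So every period
  reduces to maximising the same function of \<open>x\<close>, which depends on \<open>K = A + B\<close> only.
  Its maximiser \<open>c > 0\<close> is characterised by \<open>K = (1 - c\<^sup>2) / (c sqrt (1 + c\<^sup>2))\<close>, which
  can be solved in closed form; iterating backwards from \<open>A = B = 0\<close> yields the equilibrium.\<close>

definition insider_gain :: "real \<Rightarrow> real \<Rightarrow> real" where
  "insider_gain K x = K / sqrt (1 + x\<^sup>2) + x / (1 + x\<^sup>2)"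

lemma insider_gain_le:
  assumes c: "c > 0" and K: "K = (1 - c\<^sup>2) / (c * sqrt (1 + c\<^sup>2))"
  shows "insider_gain K x \<le> insider_gain K c"
proof -
  define t where "t = 1 / sqrt (1 + x\<^sup>2)"
  define u where "u = 1 / sqrt (1 + c\<^sup>2)"
  define q where "q = x * t"
  define p where "p = c * u"
  have x1: "1 + x\<^sup>2 > 0" and c1: "1 + c\<^sup>2 > 0" by (simp_all add: add_pos_nonneg)
  have t0: "t > 0" using x1 by (simp add: t_def)
  have u0: "u > 0" using c1 by (simp add: u_def)
  have p0: "p > 0" using c u0 by (simp add: p_def)
  have tt: "t\<^sup>2 = 1 / (1 + x\<^sup>2)" using x1 by (simp add: t_def power_divide)
  have uu: "u\<^sup>2 = 1 / (1 + c\<^sup>2)" using c1 by (simp add: u_def power_divide)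
  have circle_x: "t\<^sup>2 + q\<^sup>2 = 1" using tt x1 by (simp add: q_def power_mult_distrib field_simps)
  have circle_c: "u\<^sup>2 + p\<^sup>2 = 1" using uu c1 by (simp add: p_def power_mult_distrib field_simps)
  have Kp: "K * p = u\<^sup>2 - p\<^sup>2"
  proof -
    have "K * p = (1 - c\<^sup>2) / (sqrt (1 + c\<^sup>2) * sqrt (1 + c\<^sup>2))" using c by (simp add: K p_def u_def)
    also have "\<dots> = u\<^sup>2 - p\<^sup>2" using uu c1 by (simp add: p_def power_mult_distrib field_simps)
    finally show ?thesis .
  qed
  have gain_x: "insider_gain K x = K * t + q * t"
    using tt by (simp add: insider_gain_def t_def q_def power2_eq_square divide_inverse mult.assoc)
  have gain_c: "insider_gain K c = K * u + p * u"
    using uu by (simp add: insider_gain_def u_def p_def power2_eq_square divide_inverse mult.assoc)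
  \<comment> \<open>On the unit circle, the first-order condition \<open>K p = u\<^sup>2 - p\<^sup>2\<close> turns \<open>p\<close> times the gap into a sum of squares.\<close>
  have "p * ((K * u + p * u) - (K * t + q * t)) = (K * p) * u + p\<^sup>2 * u - (K * p) * t - p * q * t"
    by (simp add: algebra_simps power2_eq_square)
  also have "\<dots> = t * ((t - u)\<^sup>2 + (q - p)\<^sup>2) / 2 + u * (t - u)\<^sup>2"
    unfolding Kp using circle_x circle_c by algebra
  also have "\<dots> \<ge> 0" using t0 u0 by simp
  finally show ?thesis using p0 gain_x gain_c by (simp add: zero_le_mult_iff)
qed

text \<open>\<open>opt_intensity K\<^sup>2\<close> is the root in \<open>(0, 1]\<close> of \<open>(1 - y)\<^sup>2 = K\<^sup>2 y (1 + y)\<close>, the squared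
  first-order condition of \<open>insider_gain\<close>.\<close>
definition opt_intensity :: "real \<Rightarrow> real" where
  "opt_intensity K = sqrt (2 / (K\<^sup>2 + 2 + K * sqrt (K\<^sup>2 + 8)))"

lemma opt_intensity_0 [simp]: "opt_intensity 0 = 1"
  by (simp add: opt_intensity_def)

lemma
  assumes K: "K \<ge> 0"
  shows opt_intensity_pos: "opt_intensity K > 0"
    and opt_intensity_first_order:
      "K = (1 - opt_intensity K ^ 2) / (opt_intensity K * sqrt (1 + opt_intensity K ^ 2))"
proof -
  define r where "r = sqrt (K\<^sup>2 + 8)"
  have r0: "r \<ge> 0" and r2: "r\<^sup>2 = K\<^sup>2 + 8" by (simp_all add: r_def add_nonneg_nonneg)
  define D where "D = K\<^sup>2 + 2 + K * r"
  have D2: "D \<ge> 2" using K r0 by (simp add: D_def)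
  define y where "y = 2 / D"
  have y0: "y > 0" and y1: "y \<le> 1" using D2 by (auto simp: y_def)
  have cy: "opt_intensity K = sqrt y" by (simp add: opt_intensity_def y_def D_def r_def)
  have "(D - 2)\<^sup>2 = K\<^sup>2 * (K + r)\<^sup>2" by (simp add: D_def power2_eq_square algebra_simps)
  also have "(K + r)\<^sup>2 = 2 * (K\<^sup>2 + 4 + K * r)" using r2 by (simp add: power2_eq_square algebra_simps)
  finally have "(D - 2)\<^sup>2 = 2 * K\<^sup>2 * (D + 2)" by (simp add: D_def algebra_simps)
  with D2 have quad: "(1 - y)\<^sup>2 = K\<^sup>2 * (y * (1 + y))"
    by (simp add: y_def field_simps power2_eq_square)
  have "K * sqrt (y * (1 + y)) = sqrt (K\<^sup>2 * (y * (1 + y)))" using K by (simp add: real_sqrt_mult)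
  also have "\<dots> = 1 - y" using y1 by (simp add: quad[symmetric])
  finally have "K * sqrt (y * (1 + y)) = 1 - y" .
  moreover have "sqrt (y * (1 + y)) > 0" using y0 by simp
  ultimately show "K = (1 - opt_intensity K ^ 2) / (opt_intensity K * sqrt (1 + opt_intensity K ^ 2))"
    using cy y0 by (simp add: real_sqrt_mult[symmetric] field_simps)
  show "opt_intensity K > 0" using cy y0 by simp
qed

lemma insider_gain_le_opt_intensity:
  "K \<ge> 0 \<Longrightarrow> insider_gain K x \<le> insider_gain K (opt_intensity K)"
  by (intro insider_gain_le opt_intensity_pos opt_intensity_first_order)

text \<open>\<open>coeffs m = (a\<^sub>N\<^sub>-\<^sub>m, b\<^sub>N\<^sub>-\<^sub>m)\<close>, counting backwards from \<open>a\<^sub>N = b\<^sub>N = 0\<close>, and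
  \<open>coeff_c m = c\<^sub>N\<^sub>-\<^sub>m\<close>.\<close>
fun coeffs :: "nat \<Rightarrow> real \<times> real" where
  "coeffs 0 = (0, 0)"
| "coeffs (Suc m) =
     (let a = fst (coeffs m); b = snd (coeffs m); c = opt_intensity (a + b); r = sqrt (1 + c\<^sup>2)
      in (a / r + b * c\<^sup>2 / r ^ 3, b / r ^ 3 + c / (1 + c\<^sup>2)))"

definition coeff_c :: "nat \<Rightarrow> real" where
  "coeff_c m = opt_intensity (fst (coeffs m) + snd (coeffs m))"

lemma coeffs_sum_nonneg: "fst (coeffs m) + snd (coeffs m) \<ge> 0"
proof (induction m)
  case 0
  then show ?case by simp
next
  case (Suc m)
  define a b c r where "a = fst (coeffs m)" and "b = snd (coeffs m)" and "c = coeff_c m"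
    and "r = sqrt (1 + c\<^sup>2)"
  have c0: "c > 0" using opt_intensity_pos[OF Suc.IH] by (simp add: c_def coeff_c_def)
  have c1: "1 + c\<^sup>2 > 0" by (simp add: add_pos_nonneg)
  have r0: "r > 0" and r2: "r\<^sup>2 = 1 + c\<^sup>2" using c1 by (simp_all add: r_def)
  have "b * c\<^sup>2 / r ^ 3 + b / r ^ 3 = b * r\<^sup>2 / r ^ 3" by (simp add: r2 ring_distribs add_divide_distrib)
  also have "\<dots> = b / r" using r0 by (simp add: power2_eq_square power3_eq_cube)
  finally have "fst (coeffs (Suc m)) + snd (coeffs (Suc m)) = (a + b) / r + c / (1 + c\<^sup>2)"
    by (simp add: Let_def a_def b_def c_def r_def coeff_c_def add_divide_distrib algebra_simps)
  also have "\<dots> \<ge> 0" using Suc.IH r0 c0 c1 by (simp add: a_def b_def)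
  finally show ?case .
qed

lemma coeff_c_pos: "coeff_c m > 0"
  using opt_intensity_pos[OF coeffs_sum_nonneg] by (simp add: coeff_c_def)

lemma coeff_c_first_order:
  "fst (coeffs m) + snd (coeffs m) = (1 - coeff_c m ^ 2) / (coeff_c m * sqrt (1 + coeff_c m ^ 2))"
  using opt_intensity_first_order[OF coeffs_sum_nonneg] by (simp add: coeff_c_def)

lemma coeffs_Suc_eq:
  fixes m :: nat
  defines "q \<equiv> sqrt (1 / (coeff_c m ^ 2 + 1))"
  shows "coeffs (Suc m) = (fst (coeffs m) * q + snd (coeffs m) * q ^ 3 * coeff_c m ^ 2,
                           snd (coeffs m) * q ^ 3 + coeff_c m / (coeff_c m ^ 2 + 1))"
  by (simp add: q_def coeff_c_def Let_def real_sqrt_divide add.commute power_one_over)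

lemma stepv_scaled:
  assumes s: "s = su * sqrt (dt N)" and s0: "s > 0" and S: "S > 0"
    and cont: "\<And>S'. S' > 0 \<Longrightarrow> cont S' = (B * s / sqrt S', A * s * sqrt S')"
  shows "stepv su N cont S (x * s / sqrt S) =
    ((B / sqrt (1 + x\<^sup>2) ^ 3 + x / (1 + x\<^sup>2)) * s / sqrt S,
     (A / sqrt (1 + x\<^sup>2) + B * x\<^sup>2 / sqrt (1 + x\<^sup>2) ^ 3) * s * sqrt S)"
proof -
  define r where "r = sqrt (1 + x\<^sup>2)"
  define z where "z = sqrt S"
  have x1: "1 + x\<^sup>2 > 0" by (simp add: add_pos_nonneg)
  have r0: "r > 0" and r2: "r\<^sup>2 = 1 + x\<^sup>2" using x1 by (simp_all add: r_def)
  have z0: "z > 0" and Sz: "S = z\<^sup>2" using S by (simp_all add: z_def)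
  have noise: "su\<^sup>2 * dt N = s\<^sup>2" by (simp add: s dt_def power_mult_distrib)
  have "(x * s / z)\<^sup>2 * S = x\<^sup>2 * s\<^sup>2" using z0 by (simp add: Sz power_divide power_mult_distrib)
  then have den: "(x * s / z)\<^sup>2 * S + su\<^sup>2 * dt N = s\<^sup>2 * r\<^sup>2" by (simp add: noise r2 ring_distribs)
  have lam: "lamf su N S (x * s / z) = x * z / (s * r\<^sup>2)"
    unfolding lamf_def den using z0 s0 r0 by (simp add: Sz field_simps power2_eq_square)
  have sig: "sigf su N S (x * s / z) = S / r\<^sup>2"
    unfolding sigf_def den using s0 by (simp add: mult.assoc noise)
  have cont_S': "cont (S / r\<^sup>2) = (B * s * r / z, A * s * z / r)"
    using cont[of "S / r\<^sup>2"] S r0 by (simp add: z_def real_sqrt_divide)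
  have "x * z / (s * r\<^sup>2) * (x * s / z) = x\<^sup>2 / r\<^sup>2" using z0 s0 by (simp add: field_simps power2_eq_square)
  then have impact: "1 - x * z / (s * r\<^sup>2) * (x * s / z) = 1 / r\<^sup>2" using r2 x1 by (simp add: field_simps)
  have "stepv su N cont S (x * s / z) =
     ((B * s * r / z) * (1 / r\<^sup>2)\<^sup>2 + (x * s / z) * (1 / r\<^sup>2),
      A * s * z / r + (B * s * r / z) * (x * z / (s * r\<^sup>2))\<^sup>2 * s\<^sup>2)"
    unfolding stepv_def Let_def lam sig cont_S' impact by (simp add: mult.assoc noise)
  also have "\<dots> = ((B / r ^ 3 + x / r\<^sup>2) * s / z, (A / r + B * x\<^sup>2 / r ^ 3) * s * z)"
    using z0 s0 r0 by (simp add: field_simps power2_eq_square power3_eq_cube)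
  finally show ?thesis using r2 by (simp add: r_def z_def)
qed

lemma profit_scaled:
  assumes s: "s = su * sqrt (dt N)" and s0: "s > 0" and S: "S > 0"
    and cont: "\<And>S'. S' > 0 \<Longrightarrow> cont S' = (B * s / sqrt S', A * s * sqrt S')"
  shows "(let ad = stepv su N cont S (x * s / sqrt S) in fst ad * S + snd ad) =
     s * sqrt S * insider_gain (A + B) x"
proof -
  define r where "r = sqrt (1 + x\<^sup>2)"
  define z where "z = sqrt S"
  have x1: "1 + x\<^sup>2 > 0" by (simp add: add_pos_nonneg)
  have r0: "r > 0" and r2: "r\<^sup>2 = 1 + x\<^sup>2" using x1 by (simp_all add: r_def)
  have z0: "z > 0" and Sz: "S = z\<^sup>2" using S by (simp_all add: z_def)
  have "(let ad = stepv su N cont S (x * s / sqrt S) in fst ad * S + snd ad) =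
     (B / r ^ 3 + x / r\<^sup>2) * s / z * S + (A / r + B * x\<^sup>2 / r ^ 3) * s * z"
    using stepv_scaled[OF s s0 S cont, of x] r2 by (simp add: Let_def r_def z_def)
  also have "\<dots> = (B / r ^ 3 + x / r\<^sup>2) * s / z * z\<^sup>2 + (A / r + B * x\<^sup>2 / r ^ 3) * s * z"
    by (simp only: Sz)
  also have "\<dots> = s * z * ((A + B) / r + x / r\<^sup>2) + s * z * B * (1 + x\<^sup>2 - r\<^sup>2) / r ^ 3"
    using z0 r0 by (simp add: field_simps power2_eq_square power3_eq_cube)
  also have "\<dots> = s * z * ((A + B) / r + x / r\<^sup>2)" using r2 by simp
  finally show ?thesis using r2 by (simp add: insider_gain_def r_def z_def add_divide_distrib)
qed

lemma noise_scale_pos: "su > 0 \<Longrightarrow> N \<ge> 1 \<Longrightarrow> su * sqrt (dt N) > 0"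
  by (simp add: dt_def)

definition opt_strategy :: "real \<Rightarrow> nat \<Rightarrow> nat \<Rightarrow> real \<Rightarrow> real" where
  "opt_strategy su N n S = coeff_c (N - n) * su * sqrt (dt N) / sqrt S"

lemma AD_opt_strategy:
  assumes "su > 0" "N \<ge> 1" "m \<le> N" "S > 0"
  shows "AD (opt_strategy su N) su N m S =
    (snd (coeffs m) * su * sqrt (dt N) / sqrt S, fst (coeffs m) * su * sqrt (dt N) * sqrt S)"
  using assms(3,4)
proof (induction m arbitrary: S)
  case 0
  then show ?case by simp
next
  case (Suc m)
  define s where "s = su * sqrt (dt N)"
  have s0: "s > 0" using noise_scale_pos[OF assms(1,2)] by (simp add: s_def)
  have IH: "\<And>S'. S' > 0 \<Longrightarrow> AD (opt_strategy su N) su N m S' =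
      (snd (coeffs m) * s / sqrt S', fst (coeffs m) * s * sqrt S')"
    using Suc by (simp add: s_def mult.assoc)
  have "opt_strategy su N (N - m) S = coeff_c m * s / sqrt S"
    using Suc.prems by (simp add: opt_strategy_def s_def mult.assoc)
  then have "AD (opt_strategy su N) su N (Suc m) S
      = stepv su N (AD (opt_strategy su N) su N m) S (coeff_c m * s / sqrt S)" by simp
  also have "\<dots> = (snd (coeffs (Suc m)) * s / sqrt S, fst (coeffs (Suc m)) * s * sqrt S)"
    using stepv_scaled[OF s_def s0 Suc.prems(2) IH] by (simp add: Let_def coeff_c_def)
  finally show ?case by (simp add: s_def mult.assoc)
qed

lemma opt_strategy_is_SPE:
  assumes "su > 0" "N \<ge> 1"
  shows "is_SPE (opt_strategy su N) su N"
  unfolding is_SPE_def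
proof (intro ballI allI impI)
  fix n S b assume n: "n \<in> {1..N}" and S: "(S::real) > 0"
  define s where "s = su * sqrt (dt N)"
  define m where "m = N - n"
  define K where "K = fst (coeffs m) + snd (coeffs m)"
  have s0: "s > 0" using noise_scale_pos[OF assms] by (simp add: s_def)
  have cont: "\<And>S'. S' > 0 \<Longrightarrow> AD (opt_strategy su N) su N m S' =
      (snd (coeffs m) * s / sqrt S', fst (coeffs m) * s * sqrt S')"
    using AD_opt_strategy[OF assms] by (simp add: m_def s_def mult.assoc)
  note profit = profit_scaled[OF s_def s0 S cont, unfolded m_def]
  have "b = (b * sqrt S / s) * s / sqrt S" using s0 S by simp
  then have "exprofit (opt_strategy su N) su N n S b = s * sqrt S * insider_gain K (b * sqrt S / s)"
    using profit by (metis exprofit_def K_def add.commute m_def)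
  also have "\<dots> \<le> s * sqrt S * insider_gain K (coeff_c m)"
    using insider_gain_le_opt_intensity[OF coeffs_sum_nonneg] s0 S by (simp add: K_def coeff_c_def)
  also have "\<dots> = exprofit (opt_strategy su N) su N n S (opt_strategy su N n S)"
    using profit by (simp add: exprofit_def opt_strategy_def K_def s_def m_def add.commute mult.assoc)
  finally show "exprofit (opt_strategy su N) su N n S b
      \<le> exprofit (opt_strategy su N) su N n S (opt_strategy su N n S)" .
qed

fun variance_path :: "(nat \<Rightarrow> real \<Rightarrow> real) \<Rightarrow> real \<Rightarrow> nat \<Rightarrow> real \<Rightarrow> nat \<Rightarrow> real" where
  "variance_path st su N S0 0 = S0"
| "variance_path st su N S0 (Suc n) =
     sigf su N (variance_path st su N S0 n) (st (Suc n) (variance_path st su N S0 n))"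

lemma variance_path_pos:
  assumes "S0 > 0" "su > 0" "N \<ge> 1"
  shows "variance_path st su N S0 n > 0"
  using assms by (induction n) (auto simp: sigf_def dt_def intro!: divide_pos_pos mult_pos_pos add_nonneg_pos)

theorem theorem3:
  fixes N :: nat and su S0 :: real
  assumes "N \<ge> 1" and "su > 0" and "S0 > 0"
  shows "\<exists>st. is_SPE st su N \<and>
    (\<exists>(a::nat \<Rightarrow> real) (b::nat \<Rightarrow> real) (c::nat \<Rightarrow> real)
       (beta::nat \<Rightarrow> real) (lam::nat \<Rightarrow> real) (alpha::nat \<Rightarrow> real) (delta::nat \<Rightarrow> real) (Sigma::nat \<Rightarrow> real).
       Sigma 0 = S0 \<and>
       (\<forall>n\<in>{1..N}. beta n = st n (Sigma (n - 1)) \<and>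
                    lam n = lamf su N (Sigma (n - 1)) (beta n) \<and>
                    Sigma n = sigf su N (Sigma (n - 1)) (beta n)) \<and>
       (\<forall>n\<le>N. (alpha n, delta n) = AD st su N (N - n) (Sigma n)) \<and>
       (\<forall>n\<in>{0..N-1}. delta n = a n * su * sqrt (dt N) * sqrt (Sigma n) \<and>
                      alpha n = b n * su * sqrt (dt N) / sqrt (Sigma n)) \<and>
       (\<forall>n\<in>{1..N}. beta n = c n * su * sqrt (dt N) / sqrt (Sigma (n - 1))) \<and>
       a (N - 1) = 0 \<and> b (N - 1) = 1 / 2 \<and> c N = 1 \<and>
       (\<forall>n\<in>{1..N-1}.
          a (n - 1) = a n * sqrt (1 / (c n ^ 2 + 1)) + b n * sqrt (1 / (c n ^ 2 + 1)) ^ 3 * c n ^ 2 \<and>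
          b (n - 1) = b n * sqrt (1 / (c n ^ 2 + 1)) ^ 3 + c n / (c n ^ 2 + 1) \<and>
          a n + b n = (1 - c n ^ 2) / (c n * sqrt (1 + c n ^ 2))) \<and>
       (\<forall>n\<in>{1..N}. c n > 0))"
proof -
  define st where "st = opt_strategy su N"
  define Sigma where "Sigma = variance_path st su N S0"
  define a b c where "a n = fst (coeffs (N - n))" and "b n = snd (coeffs (N - n))"
    and "c n = coeff_c (N - n)" for n
  have Sigma_0: "Sigma 0 = S0" by (simp add: Sigma_def)
  have Sigma_step: "Sigma n = sigf su N (Sigma (n - 1)) (st n (Sigma (n - 1)))" if "n \<ge> 1" for n
    using that by (cases n) (simp_all add: Sigma_def)
  have AD_Sigma: "AD st su N (N - n) (Sigma n) =
      (b n * su * sqrt (dt N) / sqrt (Sigma n), a n * su * sqrt (dt N) * sqrt (Sigma n))" for n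
    using AD_opt_strategy[OF assms(2,1)] variance_path_pos[OF assms(3,2,1)]
    by (simp add: st_def Sigma_def a_def b_def)
  have recursion: "a (n - 1) = a n * sqrt (1 / (c n ^ 2 + 1)) + b n * sqrt (1 / (c n ^ 2 + 1)) ^ 3 * c n ^ 2
      \<and> b (n - 1) = b n * sqrt (1 / (c n ^ 2 + 1)) ^ 3 + c n / (c n ^ 2 + 1)"
    if "n \<in> {1..N-1}" for n
  proof -
    have "N - (n - 1) = Suc (N - n)" using that by auto
    then show ?thesis by (simp only: a_def b_def c_def coeffs_Suc_eq fst_conv snd_conv)
  qed
  have intensity: "st n S = c n * su * sqrt (dt N) / sqrt S" for n S
    by (simp add: st_def opt_strategy_def c_def)
  have first_order: "a n + b n = (1 - c n ^ 2) / (c n * sqrt (1 + c n ^ 2))" and c_pos: "c n > 0" for n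
    by (simp_all add: a_def b_def c_def coeff_c_first_order coeff_c_pos)
  have "N - (N - 1) = 1" using assms(1) by simp
  then have terminal: "a (N - 1) = 0" "b (N - 1) = 1 / 2" "c N = 1"
    by (simp_all add: a_def b_def c_def coeff_c_def)
  show ?thesis
    by (rule exI[of _ st], rule conjI[OF opt_strategy_is_SPE[OF assms(2,1), folded st_def]],
        rule exI[of _ a], rule exI[of _ b], rule exI[of _ c], rule exI[of _ "\<lambda>n. st n (Sigma (n - 1))"],
        rule exI[of _ "\<lambda>n. lamf su N (Sigma (n - 1)) (st n (Sigma (n - 1)))"],
        rule exI[of _ "\<lambda>n. fst (AD st su N (N - n) (Sigma n))"],
        rule exI[of _ "\<lambda>n. snd (AD st su N (N - n) (Sigma n))"], rule exI[of _ Sigma])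
      (auto simp: Sigma_0 Sigma_step AD_Sigma recursion[unfolded One_nat_def]
        terminal[unfolded One_nat_def] intensity first_order c_pos)
qed

end
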